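(* Let $G$ be a $\Delta$-regular bipartite graph on $2n$ vertices, where $n$ is even and $\Delta$ is even. Then the Alon-Tarsi number of $G$ equals $\frac{\Delta}{2}$.
   Context: For a graph $G$ with vertices ordered $x_1,\dots,x_N$ (treated as variables over a field of characteristic $0$), the graph polynomial is $P_G=\prod_{i<j,\ x_ix_j\in E(G)}(x_i-x_j)$. Here the Alon-Tarsi number of $G$ is defined as $\min\max_k i_k$, the minimum being over all monomials $x_1^{i_1}\cdots x_N^{i_N}$ with nonzero coefficient in $P_G$ (no $+1$ is added). *)

theory Defs
  imports "HOL-Library.Poly_Mapping"
begin

text \<open>Multivariate polynomials in variables x_0, x_1, ... with coefficients in 'a:
  monomials are finitely supported exponent vectors.\<close>
type_synonym 'a mpoly = "(nat \<Rightarrow>\<^sub>0 nat) \<Rightarrow>\<^sub>0 'a"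

definition mvar :: "nat \<Rightarrow> 'a::comm_ring_1 mpoly" where
  "mvar i = Poly_Mapping.single (Poly_Mapping.single i 1) 1"

definition simple_graph_on :: "nat \<Rightarrow> nat set set \<Rightarrow> bool" where
  "simple_graph_on N E \<longleftrightarrow> (\<forall>e\<in>E. \<exists>i j. i < j \<and> j < N \<and> e = {i, j})"

definition degree :: "nat set set \<Rightarrow> nat \<Rightarrow> nat" where
  "degree E v = card {e \<in> E. v \<in> e}"

definition regular_graph :: "nat \<Rightarrow> nat set set \<Rightarrow> nat \<Rightarrow> bool" where
  "regular_graph N E d \<longleftrightarrow> (\<forall>v < N. degree E v = d)"

definition bipartite_graph :: "nat \<Rightarrow> nat set set \<Rightarrow> bool" where
  "bipartite_graph N E \<longleftrightarrow> (\<exists>A \<subseteq> {0..<N}. \<forall>e\<in>E. card (e \<inter> A) = 1)"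

definition graph_poly :: "nat set set \<Rightarrow> 'a::comm_ring_1 mpoly" where
  "graph_poly E = (\<Prod>e\<in>E. mvar (Min e) - mvar (Max e))"

text \<open>Alon-Tarsi number (without +1) of a polynomial in variables x_0..x_{N-1}:
  min over monomials with nonzero coefficient of the maximal exponent.\<close>
definition alon_tarsi_number :: "nat \<Rightarrow> 'a::comm_ring_1 mpoly \<Rightarrow> nat" where
  "alon_tarsi_number N P =
     Min {Max (Poly_Mapping.lookup (m :: nat \<Rightarrow>\<^sub>0 nat) ` {0..<N}) | m. Poly_Mapping.lookup P m \<noteq> 0}"

end

theory Submission
  imports Defs
begin

text \<open>Let \<open>A\<close> be one side of the bipartition and orient every edge \<open>e\<close> from its endpoint
  \<open>a e \<in> A\<close> to its endpoint \<open>b e \<notin> A\<close>.  Up to a sign per edge, the graph polynomial is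
  \<open>\<Prod>e. x (a e) - x (b e)\<close>; choosing the term \<open>- x (b e)\<close> exactly for the edges \<open>e \<in> X\<close>
  yields a monomial with sign \<open>(-1) ^ card X\<close>, and \<open>card X\<close> is the degree of that monomial
  in the variables outside \<open>A\<close>.  Hence nothing cancels, and the monomials with nonzero
  coefficient are exactly those obtained from some choice \<open>X\<close>.  Each has degree
  \<open>card E = n\<Delta>\<close> in \<open>2n\<close> variables, so its largest exponent is at least \<open>\<Delta>/2\<close>.
  Conversely, all degrees being even, an Eulerian orientation gives a choice in which every
  vertex is picked exactly \<open>\<Delta>/2\<close> times.\<close>

section \<open>Balanced orientations of multigraphs\<close>

definition preimage_count :: "'i set \<Rightarrow> ('i \<Rightarrow> 'v) \<Rightarrow> 'v \<Rightarrow> nat" where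
  "preimage_count I f v = (\<Sum>k\<in>I. if f k = v then 1 else 0)"

definition pick_end :: "'i set \<Rightarrow> ('i \<Rightarrow> 'b) \<Rightarrow> ('i \<Rightarrow> 'b) \<Rightarrow> 'i \<Rightarrow> 'b" where
  "pick_end S p q k = (if k \<in> S then p k else q k)"

definition balanced :: "'i set \<Rightarrow> ('i \<Rightarrow> 'v) \<Rightarrow> ('i \<Rightarrow> 'v) \<Rightarrow> bool" where
  "balanced I t h \<longleftrightarrow> (\<forall>v. preimage_count I t v = preimage_count I h v)"

lemma preimage_count_remove:
  assumes "finite I" "i \<in> I"
  shows "preimage_count I f v = (if f i = v then 1 else 0) + preimage_count (I - {i}) f v"
  unfolding preimage_count_def using assms by (simp add: sum.remove)

lemma preimage_count_cong:
  "(\<And>k. k \<in> I \<Longrightarrow> f k = g k) \<Longrightarrow> preimage_count I f v = preimage_count I g v"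
  unfolding preimage_count_def by (auto intro: sum.cong)

lemma preimage_count_nonzero_imp_ex:
  assumes "preimage_count I f v \<noteq> 0"
  shows "\<exists>k\<in>I. f k = v"
proof (rule ccontr)
  assume "\<not> (\<exists>k\<in>I. f k = v)"
  then have "preimage_count I f v = 0" unfolding preimage_count_def by (auto intro: sum.neutral)
  with assms show False by simp
qed

lemma sum_preimage_count:
  assumes "finite V" "finite I"
  shows "(\<Sum>v\<in>V. preimage_count I f v) = card {k \<in> I. f k \<in> V}"
proof -
  have "(\<Sum>v\<in>V. preimage_count I f v) = (\<Sum>v\<in>V. \<Sum>k\<in>I. if f k = v then 1 else 0)"
    by (simp add: preimage_count_def)
  also have "\<dots> = (\<Sum>k\<in>I. if f k \<in> V then 1 else 0)"
    using assms(1) by (subst sum.swap) (simp add: sum.delta)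
  also have "\<dots> = card {k \<in> I. f k \<in> V}"
    using sum.inter_filter[OF assms(2), of "\<lambda>_. 1::nat"] by simp
  finally show ?thesis .
qed

lemma preimage_count_pick_end_swap:
  "preimage_count I (pick_end S p q) v + preimage_count I (pick_end S q p) v
     = preimage_count I p v + preimage_count I q v"
  unfolding preimage_count_def sum.distrib[symmetric] by (rule sum.cong) (auto simp: pick_end_def)

lemma balanced_drop_loop:
  assumes "finite I" "i \<in> I" "t i = h i" "balanced (I - {i}) t h"
  shows "balanced I t h"
  using assms(3,4) unfolding balanced_def
  by (simp add: preimage_count_remove[OF assms(1,2), of t] preimage_count_remove[OF assms(1,2), of h])

text \<open>Contracting a path \<open>i, j\<close> (or \<open>j, i\<close>) of two edges into the single edge \<open>i\<close>
  preserves every in- and out-degree except those of the middle vertex, which both drop by one.\<close>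
lemma balanced_of_contracted_path:
  assumes "finite I" "i \<in> I" "j \<in> I" "i \<noteq> j"
    and "balanced (I - {j}) t' h'"
    and "\<And>k. k \<in> I - {i, j} \<Longrightarrow> t' k = t k \<and> h' k = h k"
    and "h i = t j \<and> t' i = t i \<and> h' i = h j \<or> h j = t i \<and> t' i = t j \<and> h' i = h i"
  shows "balanced I t h"
  unfolding balanced_def
proof
  fix v
  have fin: "finite (I - {j})" and i: "i \<in> I - {j}" using assms(1-4) by auto
  have whole: "preimage_count I f v = (if f j = v then 1 else 0) + (if f i = v then 1 else 0)
      + preimage_count (I - {j} - {i}) f v" for f :: "_ \<Rightarrow> 'b"
    using preimage_count_remove[OF assms(1,3), of f v] preimage_count_remove[OF fin i, of f v] by simp
  have contracted: "preimage_count (I - {j}) f v = (if f i = v then 1 else 0)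
      + preimage_count (I - {j} - {i}) f v" for f :: "_ \<Rightarrow> 'b"
    using preimage_count_remove[OF fin i] .
  have "preimage_count (I - {j} - {i}) t' v = preimage_count (I - {j} - {i}) t v"
    and "preimage_count (I - {j} - {i}) h' v = preimage_count (I - {j} - {i}) h v"
    using assms(6) by (auto intro!: preimage_count_cong)
  moreover have "preimage_count (I - {j}) t' v = preimage_count (I - {j}) h' v"
    using assms(5) unfolding balanced_def by blast
  ultimately have rest: "(if t' i = v then 1 else 0) + preimage_count (I - {j} - {i}) t v
      = (if h' i = v then 1 else 0) + preimage_count (I - {j} - {i}) h v"
    using contracted[of t'] contracted[of h'] by linarith
  from assms(7) show "preimage_count I t v = preimage_count I h v"
  proof (elim disjE conjE)
    assume "h i = t j" "t' i = t i" "h' i = h j"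
    with rest whole[of t] whole[of h] show ?thesis by (simp only:)
  next
    assume "h j = t i" "t' i = t j" "h' i = h i"
    with rest whole[of t] whole[of h] show ?thesis by (simp only:)
  qed
qed

lemma even_degrees_of_contraction:
  assumes "finite I" "i \<in> I" "j \<in> I" "i \<noteq> j" "{p j, q j} = {q i, c}"
    and "even (preimage_count I p v + preimage_count I q v)"
  shows "even (preimage_count (I - {j}) p v + preimage_count (I - {j}) (q(i := c)) v)"
proof -
  have fin: "finite (I - {j})" and i: "i \<in> I - {j}" using assms(1-4) by auto
  have ends: "(if p j = v then 1 else 0) + (if q j = v then 1 else 0)
      = (if q i = v then 1 else 0) + (if c = v then 1 else (0::nat))"
    using assms(5) by (auto simp: doubleton_eq_iff)
  have "preimage_count (I - {j}) (q(i := c)) v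
      = (if c = v then 1 else 0) + preimage_count (I - {j} - {i}) q v"
    using preimage_count_remove[OF fin i, of "q(i := c)" v]
      preimage_count_cong[of "I - {j} - {i}" "q(i := c)" q v] by simp
  moreover have "preimage_count I q v = (if q j = v then 1 else 0) + (if q i = v then 1 else 0)
      + preimage_count (I - {j} - {i}) q v"
    using preimage_count_remove[OF assms(1,3), of q v] preimage_count_remove[OF fin i, of q v]
    by simp
  moreover have "preimage_count I p v = (if p j = v then 1 else 0) + preimage_count (I - {j}) p v"
    using preimage_count_remove[OF assms(1,3)] .
  ultimately have "preimage_count I p v + preimage_count I q v
      = preimage_count (I - {j}) p v + preimage_count (I - {j}) (q(i := c)) v
        + 2 * (if q i = v then 1 else 0)"
    using ends by linarith
  with assms(6) show ?thesis by simp
qed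

lemma balanced_reorientation_of_contraction:
  assumes "finite I" "i \<in> I" "j \<in> I" "i \<noteq> j"
    and "p j = q i \<or> q j = q i" "c = (if p j = q i then q j else p j)"
    and "S' \<subseteq> I - {j}" "balanced (I - {j}) (pick_end S' p (q(i := c))) (pick_end S' (q(i := c)) p)"
  shows "\<exists>S\<subseteq>I. balanced I (pick_end S p q) (pick_end S q p)"
proof -
  define S where "S = (if (i \<in> S') = (p j = q i) then insert j S' else S')"
  have "balanced I (pick_end S p q) (pick_end S q p)"
  proof (rule balanced_of_contracted_path[OF assms(1-4,8)])
    show "pick_end S' p (q(i := c)) k = pick_end S p q k
        \<and> pick_end S' (q(i := c)) p k = pick_end S q p k" if "k \<in> I - {i, j}" for k
      using that by (auto simp: pick_end_def S_def)
    show "pick_end S q p i = pick_end S p q j \<and> pick_end S' p (q(i := c)) i = pick_end S p q i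
          \<and> pick_end S' (q(i := c)) p i = pick_end S q p j
        \<or> pick_end S q p j = pick_end S p q i \<and> pick_end S' p (q(i := c)) i = pick_end S p q j
          \<and> pick_end S' (q(i := c)) p i = pick_end S q p i"
      using assms(4-7) by (auto simp: pick_end_def S_def)
  qed
  moreover have "S \<subseteq> I" using assms(3,7) by (auto simp: S_def)
  ultimately show ?thesis by blast
qed

text \<open>Euler's argument, by induction on the number of edges: a loop is dropped; otherwise an
  edge \<open>i\<close> ending in \<open>b\<close> is merged with a second edge \<open>j\<close> at \<open>b\<close>, which exists by parity.\<close>
lemma balanced_reorientation_exists:
  assumes "finite I" "\<And>v. even (preimage_count I p v + preimage_count I q v)"
  shows "\<exists>S\<subseteq>I. balanced I (pick_end S p q) (pick_end S q p)"
  using assms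
proof (induction "card I" arbitrary: I q rule: less_induct)
  case less
  show ?case
  proof (cases "I = {}")
    case True
    then show ?thesis by (auto simp: balanced_def preimage_count_def)
  next
    case False
    then obtain i where i: "i \<in> I" by blast
    show ?thesis
    proof (cases "p i = q i")
      case True
      have "card (I - {i}) < card I" "finite (I - {i})"
        using less.prems(1) card_Diff1_less[OF less.prems(1) i] by simp_all
      moreover have "even (preimage_count (I - {i}) p v + preimage_count (I - {i}) q v)" for v
        using less.prems(2)[of v] True preimage_count_remove[OF less.prems(1) i, of p v]
          preimage_count_remove[OF less.prems(1) i, of q v] by (auto split: if_splits)
      ultimately obtain S where S: "S \<subseteq> I - {i}"
        and "balanced (I - {i}) (pick_end S p q) (pick_end S q p)"
        using less.hyps[of "I - {i}" q] by auto
      moreover have "pick_end S p q i = pick_end S q p i" using S True by (auto simp: pick_end_def)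
      ultimately have "balanced I (pick_end S p q) (pick_end S q p)"
        using balanced_drop_loop[OF less.prems(1) i] by blast
      with S show ?thesis by blast
    next
      case False
      define b where "b = q i"
      have "preimage_count (I - {i}) p b + preimage_count (I - {i}) q b \<noteq> 0"
      proof
        assume "preimage_count (I - {i}) p b + preimage_count (I - {i}) q b = 0"
        then have "preimage_count I p b + preimage_count I q b = 1"
          using preimage_count_remove[OF less.prems(1) i, of p b]
            preimage_count_remove[OF less.prems(1) i, of q b] False b_def by simp
        with less.prems(2)[of b] show False by simp
      qed
      then have "preimage_count (I - {i}) p b \<noteq> 0 \<or> preimage_count (I - {i}) q b \<noteq> 0"
        by simp
      then obtain j where j: "j \<in> I - {i}" "p j = b \<or> q j = b"
        using preimage_count_nonzero_imp_ex[of "I - {i}" p b]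
          preimage_count_nonzero_imp_ex[of "I - {i}" q b] by blast
      define c where "c = (if p j = b then q j else p j)"
      have j_in: "j \<in> I" "i \<noteq> j" using j(1) by auto
      have ends: "{p j, q j} = {q i, c}" using j(2) by (auto simp: c_def b_def)
      have "card (I - {j}) < card I" "finite (I - {j})"
        using less.prems(1) card_Diff1_less[OF less.prems(1) j_in(1)] by simp_all
      moreover have "even (preimage_count (I - {j}) p v + preimage_count (I - {j}) (q(i := c)) v)"
        for v using even_degrees_of_contraction[OF less.prems(1) i j_in ends less.prems(2)] .
      ultimately obtain S' where S': "S' \<subseteq> I - {j}"
        and bal': "balanced (I - {j}) (pick_end S' p (q(i := c))) (pick_end S' (q(i := c)) p)"
        using less.hyps[of "I - {j}" "q(i := c)"] by auto
      show ?thesis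
        using balanced_reorientation_of_contraction[OF less.prems(1) i j_in _ _ S' bal'] j(2) c_def
        unfolding b_def by blast
    qed
  qed
qed

section \<open>Expanding products of binomials\<close>

definition pick_monomial :: "'i set \<Rightarrow> 'i set \<Rightarrow> ('i \<Rightarrow> nat) \<Rightarrow> ('i \<Rightarrow> nat) \<Rightarrow> (nat \<Rightarrow>\<^sub>0 nat)" where
  "pick_monomial I S p q = (\<Sum>k\<in>I. Poly_Mapping.single (pick_end S p q k) 1)"

lemma lookup_pick_monomial:
  "Poly_Mapping.lookup (pick_monomial I S p q) v = preimage_count I (pick_end S p q) v"
  unfolding pick_monomial_def preimage_count_def lookup_sum lookup_single when_def by simp

lemma prod_single:
  fixes c :: "'i \<Rightarrow> 'a::comm_semiring_1"
  assumes "finite I"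
  shows "(\<Prod>k\<in>I. Poly_Mapping.single (m k) (c k)) = Poly_Mapping.single (\<Sum>k\<in>I. m k) (\<Prod>k\<in>I. c k)"
  using assms by (induction I rule: finite_induct) (simp_all add: mult_single)

lemma prod_scaled_differences_expand:
  fixes u :: "'i \<Rightarrow> 'a::comm_ring_1"
  assumes "finite I"
  shows "(\<Prod>k\<in>I. Poly_Mapping.single 0 (u k) * (mvar (p k) - mvar (q k)))
    = (\<Sum>X\<in>Pow I. Poly_Mapping.single (pick_monomial I X q p) ((-1) ^ card X * (\<Prod>k\<in>I. u k)))"
proof -
  have factor: "Poly_Mapping.single 0 (u k) * (mvar (p k) - mvar (q k))
      = Poly_Mapping.single (Poly_Mapping.single (p k) 1) (u k)
        - Poly_Mapping.single (Poly_Mapping.single (q k) 1) (u k)" for k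
    by (simp add: mvar_def right_diff_distrib mult_single)
  have summand: "(-1) ^ card X * (\<Prod>k\<in>X. Poly_Mapping.single (Poly_Mapping.single (q k) 1) (u k))
        * (\<Prod>k\<in>I - X. Poly_Mapping.single (Poly_Mapping.single (p k) 1) (u k))
      = Poly_Mapping.single (pick_monomial I X q p) ((-1) ^ card X * (\<Prod>k\<in>I. u k))"
    if "X \<subseteq> I" for X
  proof -
    have "(\<Prod>k\<in>X. Poly_Mapping.single (Poly_Mapping.single (q k) 1) (u k))
        * (\<Prod>k\<in>I - X. Poly_Mapping.single (Poly_Mapping.single (p k) 1) (u k))
        = (\<Prod>k\<in>I. if k \<in> X then Poly_Mapping.single (Poly_Mapping.single (q k) 1) (u k)
            else Poly_Mapping.single (Poly_Mapping.single (p k) 1) (u k))"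
      using that by (simp add: prod.If_cases[OF assms] Int_absorb1 Diff_eq)
    also have "\<dots> = (\<Prod>k\<in>I. Poly_Mapping.single (Poly_Mapping.single (pick_end X q p k) 1) (u k))"
      by (rule prod.cong) (simp_all add: pick_end_def)
    also have "\<dots> = Poly_Mapping.single (pick_monomial I X q p) (\<Prod>k\<in>I. u k)"
      unfolding pick_monomial_def using assms by (rule prod_single)
    finally show ?thesis
      by (simp add: mult.assoc minus_one_power_iff single_uminus)
  qed
  show ?thesis
    unfolding factor prod_diff_conv_sum[OF assms] by (intro sum.cong refl summand) simp
qed

lemma card_eq_sum_lookup_pick_monomial:
  assumes "finite I" "X \<subseteq> I" "\<And>k. k \<in> I \<Longrightarrow> p k \<in> A" "\<And>k. k \<in> I \<Longrightarrow> q k \<notin> A"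
  shows "card X = (\<Sum>v\<in>q ` I - A. Poly_Mapping.lookup (pick_monomial I X q p) v)"
proof -
  have "{k \<in> I. pick_end X q p k \<in> q ` I - A} = X"
    using assms(2-4) by (auto simp: pick_end_def)
  then show ?thesis
    using sum_preimage_count[of "q ` I - A" I "pick_end X q p"] assms(1)
    by (simp add: lookup_pick_monomial)
qed

lemma lookup_prod_bipartite_nonzero_iff:
  fixes u :: "'i \<Rightarrow> 'a::{idom, ring_char_0}"
  assumes "finite I" "\<And>k. k \<in> I \<Longrightarrow> p k \<in> A" "\<And>k. k \<in> I \<Longrightarrow> q k \<notin> A"
    and "\<And>k. k \<in> I \<Longrightarrow> u k \<noteq> 0"
  shows "Poly_Mapping.lookup (\<Prod>k\<in>I. Poly_Mapping.single 0 (u k) * (mvar (p k) - mvar (q k))) m \<noteq> 0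
    \<longleftrightarrow> (\<exists>X\<subseteq>I. pick_monomial I X q p = m)"
proof -
  define T where "T = {X \<in> Pow I. pick_monomial I X q p = m}"
  define e where "e = (\<Sum>v\<in>q ` I - A. Poly_Mapping.lookup m v)"
  have "Poly_Mapping.lookup (\<Prod>k\<in>I. Poly_Mapping.single 0 (u k) * (mvar (p k) - mvar (q k))) m
      = (\<Sum>X\<in>T. (-1) ^ card X * (\<Prod>k\<in>I. u k))"
    unfolding prod_scaled_differences_expand[OF assms(1)] lookup_sum lookup_single when_def T_def
    using sum.inter_filter[of "Pow I" "\<lambda>X. (-1) ^ card X * (\<Prod>k\<in>I. u k)"
        "\<lambda>X. pick_monomial I X q p = m"] assms(1)
    by simp
  also have "\<dots> = (\<Sum>X\<in>T. (-1) ^ e * (\<Prod>k\<in>I. u k))"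
  proof (rule sum.cong)
    fix X assume "X \<in> T"
    then have "card X = e"
      unfolding T_def e_def using card_eq_sum_lookup_pick_monomial[OF assms(1) _ assms(2,3)] by auto
    then show "(-1) ^ card X * (\<Prod>k\<in>I. u k) = (-1) ^ e * (\<Prod>k\<in>I. u k)" by simp
  qed simp
  finally have "Poly_Mapping.lookup (\<Prod>k\<in>I. Poly_Mapping.single 0 (u k) * (mvar (p k) - mvar (q k))) m
      = of_nat (card T) * ((-1) ^ e * (\<Prod>k\<in>I. u k))"
    by simp
  moreover have "(\<Prod>k\<in>I. u k) \<noteq> 0" using assms(1,4) by simp
  moreover have "finite T" using assms(1) by (simp add: T_def)
  ultimately show ?thesis by (auto simp: T_def)
qed

lemma half_degree_pick_monomial_exists:
  assumes "finite I" "\<And>v. even (preimage_count I p v + preimage_count I q v)"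
  shows "\<exists>S\<subseteq>I. \<forall>v. Poly_Mapping.lookup (pick_monomial I S p q) v
    = (preimage_count I p v + preimage_count I q v) div 2"
proof -
  obtain S where S: "S \<subseteq> I" and "balanced I (pick_end S p q) (pick_end S q p)"
    using balanced_reorientation_exists[OF assms] by blast
  then have "2 * preimage_count I (pick_end S p q) v = preimage_count I p v + preimage_count I q v"
    for v using preimage_count_pick_end_swap[of I S p q v] by (simp add: balanced_def)
  then have "Poly_Mapping.lookup (pick_monomial I S p q) v
      = (preimage_count I p v + preimage_count I q v) div 2" for v
    by (metis lookup_pick_monomial nonzero_mult_div_cancel_left zero_neq_numeral)
  with S show ?thesis by blast
qed

lemma sum_lookup_pick_monomial:
  assumes "finite I" "finite V" "\<And>k. k \<in> I \<Longrightarrow> p k \<in> V" "\<And>k. k \<in> I \<Longrightarrow> q k \<in> V"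
  shows "(\<Sum>v\<in>V. Poly_Mapping.lookup (pick_monomial I S p q) v) = card I"
proof -
  have "{k \<in> I. pick_end S p q k \<in> V} = I" using assms(3,4) by (auto simp: pick_end_def)
  then show ?thesis using sum_preimage_count[OF assms(2,1)] by (simp add: lookup_pick_monomial)
qed

lemma le_Max_image_if_card_mult_le_sum:
  fixes f :: "'b \<Rightarrow> nat"
  assumes "finite V" "V \<noteq> {}" "card V * d \<le> (\<Sum>v\<in>V. f v)"
  shows "d \<le> Max (f ` V)"
proof -
  have "(\<Sum>v\<in>V. f v) \<le> card V * Max (f ` V)"
    using sum_bounded_above[of V f "Max (f ` V)"] assms(1) by simp
  with assms have "card V * d \<le> card V * Max (f ` V)" by linarith
  moreover have "card V > 0" using assms(1,2) by (simp add: card_gt_0_iff)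
  ultimately show ?thesis by simp
qed

lemma alon_tarsi_number_eqI:
  assumes "Poly_Mapping.lookup P m \<noteq> 0" "Max (Poly_Mapping.lookup m ` {0..<N}) = d"
    and "\<And>m'. Poly_Mapping.lookup P m' \<noteq> 0 \<Longrightarrow> d \<le> Max (Poly_Mapping.lookup m' ` {0..<N})"
  shows "alon_tarsi_number N P = d"
proof -
  have "{m. Poly_Mapping.lookup P m \<noteq> 0} = Poly_Mapping.keys P"
    by (simp add: lookup_not_eq_zero_eq_in_keys)
  then have "finite {Max (Poly_Mapping.lookup m ` {0..<N}) | m. Poly_Mapping.lookup P m \<noteq> 0}"
    using finite_image_set[of "\<lambda>m. Poly_Mapping.lookup P m \<noteq> 0"] by simp
  then show ?thesis
    unfolding alon_tarsi_number_def by (rule Min_eqI) (use assms in auto)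
qed

section \<open>Regular bipartite graphs\<close>

lemma simple_graph_on_finite: "simple_graph_on N E \<Longrightarrow> finite E"
proof -
  assume "simple_graph_on N E"
  then have "E \<subseteq> Pow {0..<N}" by (force simp: simple_graph_on_def)
  then show "finite E" by (rule finite_subset) simp
qed

lemma degree_regular_graph:
  assumes "simple_graph_on N E" "regular_graph N E d"
  shows "degree E v = (if v < N then d else 0)"
proof (cases "v < N")
  case False
  then have no_edge: "{e \<in> E. v \<in> e} = {}" using assms(1) by (force simp: simple_graph_on_def)
  show ?thesis unfolding degree_def no_edge using False by simp
qed (use assms(2) in \<open>simp add: regular_graph_def\<close>)

lemma bipartite_graph_orientation:
  assumes "simple_graph_on N E" "bipartite_graph N E"
  obtains A a b where "\<And>e. e \<in> E \<Longrightarrow> e = {a e, b e} \<and> a e \<in> A \<and> b e \<notin> A \<and> a e < N \<and> b e < N"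
proof -
  obtain A where A: "\<forall>e\<in>E. card (e \<inter> A) = 1"
    using assms(2) unfolding bipartite_graph_def by blast
  define a where "a e = (if Min e \<in> A then Min e else Max e)" for e :: "nat set"
  define b where "b e = (if Min e \<in> A then Max e else Min e)" for e :: "nat set"
  have "e = {a e, b e} \<and> a e \<in> A \<and> b e \<notin> A \<and> a e < N \<and> b e < N" if "e \<in> E" for e
  proof -
    from assms(1) that obtain i j where ij: "i < j" "j < N" and e: "e = {i, j}"
      unfolding simple_graph_on_def by blast
    have "card ({i, j} \<inter> A) = 1" using A that e by blast
    then have "i \<in> A \<longleftrightarrow> j \<notin> A"
      using ij(1) by (cases "i \<in> A"; cases "j \<in> A") simp_all
    with ij show ?thesis unfolding e a_def b_def by auto
  qed
  then show thesis by (rule that)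
qed

lemma graph_poly_oriented:
  assumes "\<And>e. e \<in> E \<Longrightarrow> e = {a e, b e} \<and> a e \<noteq> b e"
  shows "graph_poly E = (\<Prod>e\<in>E. Poly_Mapping.single 0 (if a e < b e then 1 else -1)
    * (mvar (a e) - mvar (b e)))"
  unfolding graph_poly_def
proof (rule prod.cong)
  fix e assume "e \<in> E"
  define x y where "x = a e" and "y = b e"
  have "e = {x, y}" "x \<noteq> y" using assms[OF \<open>e \<in> E\<close>] by (simp_all add: x_def y_def)
  then show "mvar (Min e) - mvar (Max e) = Poly_Mapping.single 0 (if a e < b e then 1 else -1)
      * (mvar (a e) - mvar (b e))"
    unfolding x_def[symmetric] y_def[symmetric]
    by (cases "x < y") (auto simp: single_uminus min_def max_def)
qed simp

lemma bipartite_graph_poly_support: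
  assumes "simple_graph_on N E" "bipartite_graph N E"
  obtains a b where "\<And>e. e \<in> E \<Longrightarrow> e = {a e, b e} \<and> a e \<noteq> b e"
    and "\<And>e. e \<in> E \<Longrightarrow> a e \<in> {0..<N}" "\<And>e. e \<in> E \<Longrightarrow> b e \<in> {0..<N}"
    and "\<And>m. Poly_Mapping.lookup (graph_poly E :: 'a::{idom, ring_char_0} mpoly) m \<noteq> 0
      \<longleftrightarrow> (\<exists>X\<subseteq>E. pick_monomial E X b a = m)"
proof -
  obtain A a b
    where ab: "\<And>e. e \<in> E \<Longrightarrow> e = {a e, b e} \<and> a e \<in> A \<and> b e \<notin> A \<and> a e < N \<and> b e < N"
    by (rule bipartite_graph_orientation[OF assms]) (rule that)
  have edges: "\<And>e. e \<in> E \<Longrightarrow> e = {a e, b e} \<and> a e \<noteq> b e" using ab by metis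
  have "Poly_Mapping.lookup (graph_poly E :: 'a mpoly) m \<noteq> 0
      \<longleftrightarrow> (\<exists>X\<subseteq>E. pick_monomial E X b a = m)" for m
    using graph_poly_oriented[OF edges, where 'a = 'a] ab
    by (simp only:) (rule lookup_prod_bipartite_nonzero_iff[OF simple_graph_on_finite[OF assms(1)],
        where A = A], simp_all)
  with edges ab show thesis by (intro that) auto
qed

lemma degree_eq_preimage_count:
  assumes "finite E" "\<And>e. e \<in> E \<Longrightarrow> e = {a e, b e} \<and> a e \<noteq> b e"
  shows "degree E v = preimage_count E a v + preimage_count E b v"
proof -
  have "degree E v = (\<Sum>e\<in>E. if v \<in> e then 1 else 0)"
    unfolding degree_def using sum.inter_filter[OF assms(1), of "\<lambda>_. 1::nat"] by simp
  also have "\<dots> = (\<Sum>e\<in>E. (if a e = v then 1 else 0) + (if b e = v then 1 else 0))"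
  proof (rule sum.cong)
    fix e assume "e \<in> E"
    then have "e = {a e, b e}" "a e \<noteq> b e" using assms(2) by blast+
    then have "v \<in> e \<longleftrightarrow> v = a e \<or> v = b e" by blast
    with \<open>a e \<noteq> b e\<close> show "(if v \<in> e then 1 else 0)
        = (if a e = v then 1 else 0) + (if b e = v then 1 else (0::nat))" by auto
  qed simp
  finally show ?thesis by (simp add: preimage_count_def sum.distrib)
qed

theorem mainTheorem5:
  fixes n \<Delta> :: nat and E :: "nat set set"
  assumes "n > 0" and "even n" and "even \<Delta>"
    and "simple_graph_on (2 * n) E"
    and "regular_graph (2 * n) E \<Delta>"
    and "bipartite_graph (2 * n) E"
  shows "alon_tarsi_number (2 * n) (graph_poly E :: 'a::field_char_0 mpoly) = \<Delta> div 2"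
proof -
  obtain a b where edges: "\<And>e. e \<in> E \<Longrightarrow> e = {a e, b e} \<and> a e \<noteq> b e"
    and bounds: "\<And>e. e \<in> E \<Longrightarrow> a e \<in> {0..<2 * n}" "\<And>e. e \<in> E \<Longrightarrow> b e \<in> {0..<2 * n}"
    and nonzero_iff: "\<And>m. Poly_Mapping.lookup (graph_poly E :: 'a mpoly) m \<noteq> 0
      \<longleftrightarrow> (\<exists>X\<subseteq>E. pick_monomial E X b a = m)"
    by (rule bipartite_graph_poly_support[OF assms(4,6)]) (rule that)
  have fin: "finite E" using assms(4) by (rule simple_graph_on_finite)
  have degrees: "preimage_count E b v + preimage_count E a v = (if v < 2 * n then \<Delta> else 0)" for v
    using degree_eq_preimage_count[OF fin edges] degree_regular_graph[OF assms(4,5)] by simp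
  then have "\<exists>X\<subseteq>E. \<forall>v. Poly_Mapping.lookup (pick_monomial E X b a) v
      = (preimage_count E b v + preimage_count E a v) div 2"
    using half_degree_pick_monomial_exists[OF fin, of b a] assms(3) by simp
  then obtain X0 where X0: "X0 \<subseteq> E"
    and half: "\<And>v. Poly_Mapping.lookup (pick_monomial E X0 b a) v = (if v < 2 * n then \<Delta> div 2 else 0)"
    unfolding degrees by auto
  have total: "(\<Sum>v\<in>{0..<2 * n}. Poly_Mapping.lookup (pick_monomial E X b a) v) = 2 * n * (\<Delta> div 2)"
    for X using sum_lookup_pick_monomial[where p = b and q = a and S = X, OF fin _ bounds(2,1)]
      sum_lookup_pick_monomial[where p = b and q = a and S = X0, OF fin _ bounds(2,1)] by (simp add: half)
  show ?thesis
  proof (rule alon_tarsi_number_eqI)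
    show "Poly_Mapping.lookup (graph_poly E :: 'a mpoly) (pick_monomial E X0 b a) \<noteq> 0"
      using nonzero_iff X0 by blast
    show "Max (Poly_Mapping.lookup (pick_monomial E X0 b a) ` {0..<2 * n}) = \<Delta> div 2"
      using assms(1) by (simp add: half image_constant_conv)
  next
    fix m assume "Poly_Mapping.lookup (graph_poly E :: 'a mpoly) m \<noteq> 0"
    then obtain X where "pick_monomial E X b a = m" using nonzero_iff by blast
    then show "\<Delta> div 2 \<le> Max (Poly_Mapping.lookup m ` {0..<2 * n})"
      using le_Max_image_if_card_mult_le_sum[of "{0..<2 * n}"] total[of X] assms(1) by simp
  qed
qed

end
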